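(* Let $n\ge2$ and let $\mathcal{S}$ be a quadric hypersurface in $\mathbb{R}^n$ containing at least two points but no line, with an affine change of variables $\mathbf{s}=T\mathbf{s}'+\mathbf{v}$ bringing it into one of the normal forms (1)–(3), and with the associated parameterisation $\boldsymbol{\sigma}(\mathbf{t})=T\boldsymbol{\sigma}'(\mathbf{t})+\mathbf{v}$, $\mathbf{t}\in D$, described in the context. Let $O\subseteq D\setminus\sigma_1^{-1}(0)$ be an open set. If there is $\mathbf{t}\in O$ such that \[\det\left(\frac{\partial\overline{\boldsymbol{\sigma}}'(\mathbf{t})}{\partial\mathbf{t}}\right)\neq0,\] where $\overline{\boldsymbol{\sigma}}'=(\sigma_1',\dots,\sigma_{n-1}')^T$, then $\boldsymbol{\sigma}(O)=\{\boldsymbol{\sigma}(\mathbf{t}):\mathbf{t}\in O\}$ is not contained in any (affine) hyperplane of $\mathbb{R}^n$ (i.e. $O$ satisfies the hyperplane condition).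
   Context: Let $\mathcal{S}=\{\mathbf{s}\in\mathbb{R}^n:\tfrac12\mathbf{s}^TA\mathbf{s}+\mathbf{b}^T\mathbf{s}+c=0\}$ with $A$ a nonzero real symmetric matrix, and assume $\mathcal{S}$ contains at least two points but no line. Let $T$ be an invertible real $n\times n$ matrix and $\mathbf{v}\in\mathbb{R}^n$ such that under $\mathbf{s}=T\mathbf{s}'+\mathbf{v}$ the equation of $\mathcal{S}$ becomes one of: (1) (when $\operatorname{rk}A=n-1$) $\sum_{j=1}^{n-1}\epsilon_js_j'^2=s_n'$ with $\epsilon_j\in\{-1,1\}$; (2) (when $\operatorname{rk}A=n$ and $A$ has eigenvalues of both signs) $s_1's_n'+\sum_{j=2}^{n-1}\epsilon_js_j'^2=c'$ with $c'\neq0$, $\epsilon_j\in\{-1,1\}$; (3) (when $\operatorname{rk}A=n$ and all eigenvalues of $A$ have the same sign) $\sum_{j=1}^ns_j'^2=1$. The parameterisation $\boldsymbol{\sigma}'=(\sigma_1',\dots,\sigma_n')^T$ of the normal form is: in case (1), $\sigma_j'(\mathbf{t})=t_j$ for $j\le n-1$, $\sigma_n'(\mathbf{t})=\sum_{j=1}^{n-1}\epsilon_jt_j^2$, $D=\mathbb{R}^{n-1}$; in case (2), $\sigma_j'(\mathbf{t})=t_j$ for $j\le n-1$, $\sigma_n'(\mathbf{t})=\frac{1}{t_1}\big(c'-\sum_{j=2}^{n-1}\epsilon_jt_j^2\big)$, $D=(\mathbb{R}\setminus\{0\})\times\mathbb{R}^{n-2}$; in case (3), $\boldsymbol{\sigma}'(\mathbf{t})=\boldsymbol{\tau}(\boldsymbol{\varphi})$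 with $\varphi_j=2\arctan(t_j)$, where $\boldsymbol{\tau}$ is the spherical-coordinate map $\tau_1=\cos\varphi_1$, $\tau_k=\sin\varphi_1\cdots\sin\varphi_{k-1}\cos\varphi_k$ for $2\le k\le n-1$, $\tau_n=\sin\varphi_1\cdots\sin\varphi_{n-1}$, $D=\mathbb{R}^{n-1}$. Then $\boldsymbol{\sigma}(\mathbf{t})=T\boldsymbol{\sigma}'(\mathbf{t})+\mathbf{v}$ with components $\sigma_1,\dots,\sigma_n$, and $\sigma_1^{-1}(0)$ is the zero set of $\sigma_1$. *)

theory Defs
  imports Complex_Main "HOL-Analysis.Derivative" "Jordan_Normal_Form.Determinant" "Jordan_Normal_Form.Char_Poly"
    "Jordan_Normal_Form.DL_Rank"
begin

text \<open>Vectors in R^k are JNF vectors of dimension k, indexed 0..k-1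
  (paper index j corresponds to index j-1 here).\<close>

definition quadric :: "nat \<Rightarrow> real mat \<Rightarrow> real vec \<Rightarrow> real \<Rightarrow> real vec set" where
  "quadric n A b c = {s \<in> carrier_vec n. (1/2) * (s \<bullet> (A *\<^sub>v s)) + b \<bullet> s + c = 0}"

definition contains_line :: "nat \<Rightarrow> real vec set \<Rightarrow> bool" where
  "contains_line n S = (\<exists>p d. p \<in> carrier_vec n \<and> d \<in> carrier_vec n \<and> d \<noteq> 0\<^sub>v n \<and>
      (\<forall>r::real. p + r \<cdot>\<^sub>v d \<in> S))"

definition mat_rank :: "nat \<Rightarrow> real mat \<Rightarrow> nat" where
  "mat_rank n A = vec_space.rank n A"

datatype nf_case = Paraboloid | Hyperboloid | Ellipsoid

definition normal_form :: "nf_case \<Rightarrow> nat \<Rightarrow> (nat \<Rightarrow> real) \<Rightarrow> real \<Rightarrow> real vec \<Rightarrow> bool" where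
  "normal_form k n eps c' s' = (case k of
      Paraboloid \<Rightarrow> (\<Sum>j<n-1. eps j * (s' $ j)^2) = s' $ (n-1)
    | Hyperboloid \<Rightarrow> s' $ 0 * s' $ (n-1) + (\<Sum>j\<in>{1..<n-1}. eps j * (s' $ j)^2) = c'
    | Ellipsoid \<Rightarrow> (\<Sum>j<n. (s' $ j)^2) = 1)"

definition sph :: "nat \<Rightarrow> real vec \<Rightarrow> real vec" where
  "sph n phi = vec n (\<lambda>k. (\<Prod>i<k. sin (phi $ i)) * (if k = n-1 then 1 else cos (phi $ k)))"

definition sigma' :: "nf_case \<Rightarrow> nat \<Rightarrow> (nat \<Rightarrow> real) \<Rightarrow> real \<Rightarrow> real vec \<Rightarrow> real vec" where
  "sigma' k n eps c' t = (case k of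
      Paraboloid \<Rightarrow> vec n (\<lambda>j. if j < n-1 then t $ j else (\<Sum>i<n-1. eps i * (t $ i)^2))
    | Hyperboloid \<Rightarrow> vec n (\<lambda>j. if j < n-1 then t $ j
          else (1 / t $ 0) * (c' - (\<Sum>i\<in>{1..<n-1}. eps i * (t $ i)^2)))
    | Ellipsoid \<Rightarrow> sph n (vec (n-1) (\<lambda>j. 2 * arctan (t $ j))))"

definition param_dom :: "nf_case \<Rightarrow> nat \<Rightarrow> real vec set" where
  "param_dom k n = (case k of
      Hyperboloid \<Rightarrow> {t \<in> carrier_vec (n-1). t $ 0 \<noteq> 0}
    | _ \<Rightarrow> carrier_vec (n-1))"

definition sigma :: "real mat \<Rightarrow> real vec \<Rightarrow> nf_case \<Rightarrow> nat \<Rightarrow> (nat \<Rightarrow> real) \<Rightarrow> real \<Rightarrow> real vec \<Rightarrow> real vec" where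
  "sigma T v k n eps c' t = T *\<^sub>v sigma' k n eps c' t + v"

definition open_vec :: "nat \<Rightarrow> real vec set \<Rightarrow> bool" where
  "open_vec m U = (U \<subseteq> carrier_vec m \<and>
     (\<forall>t\<in>U. \<exists>e>0. \<forall>u\<in>carrier_vec m. sqrt (\<Sum>i<m. (u $ i - t $ i)^2) < e \<longrightarrow> u \<in> U))"

definition vupd :: "real vec \<Rightarrow> nat \<Rightarrow> real \<Rightarrow> real vec" where
  "vupd t j x = vec (dim_vec t) (\<lambda>i. if i = j then x else t $ i)"

definition jacobian :: "nat \<Rightarrow> nat \<Rightarrow> (real vec \<Rightarrow> real vec) \<Rightarrow> real vec \<Rightarrow> real mat" where
  "jacobian p m f t = mat p m (\<lambda>(i,j). deriv (\<lambda>x. f (vupd t j x) $ i) (t $ j))"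

definition vtrunc :: "nat \<Rightarrow> real vec \<Rightarrow> real vec" where
  "vtrunc n x = vec (n-1) (\<lambda>i. x $ i)"

definition hyperplane :: "nat \<Rightarrow> real vec \<Rightarrow> real \<Rightarrow> real vec set" where
  "hyperplane n a d = {s \<in> carrier_vec n. a \<bullet> s = d}"

end

theory Submission
  imports Defs
begin

(* If sigma(O) lay in a hyperplane a.s = d with a nonzero, then a' = T^T a would be nonzero and
   sum_i a'_i sigma'_i(t) = d - a.v would hold on O.  Letting a single coordinate t_j of a point
   of O run through an interval turns this relation into the vanishing of a polynomial of degree
   at most 2 in t_j: directly for the paraboloid, after multiplying by t_1 for the hyperboloid, and
   for the sphere after the half-angle substitution cos phi = (1 - t^2)/(1 + t^2),
   sin phi = 2t/(1 + t^2).  Its coefficients vanish, which kills a' one coordinate at a time.  For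
   the sphere the coefficients carry the factors sin phi_1 ... sin phi_k; these are nonzero since a
   vanishing sin phi_i (i < n - 1) makes the column of t_(n-1) in the Jacobian of the truncated
   parameterisation vanish. *)

unbundle no vec_syntax

lemma det_eq_0_if_zero_col:
  assumes A: "A \<in> carrier_mat n n" and j: "j < n" and zero: "\<And>i. i < n \<Longrightarrow> A $$ (i, j) = 0"
  shows "det A = 0"
proof -
  have "(\<Prod>l<n. A $$ (p l, l)) = 0" if "p permutes {0..<n}" for p
  proof (rule prod_zero)
    have "p j < n" using that j by (simp add: permutes_in_image)
    then show "\<exists>l\<in>{..<n}. A $$ (p l, l) = 0" using j zero by blast
  qed simp
  then show ?thesis unfolding det_col[OF A] by simp
qed

lemma invertible_transpose_kernel_trivial:
  fixes T :: "real mat"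
  assumes T: "T \<in> carrier_mat n n" "invertible_mat T"
    and a: "a \<in> carrier_vec n" "transpose_mat T *\<^sub>v a = 0\<^sub>v n"
  shows "a = 0\<^sub>v n"
proof -
  from T obtain B where TB: "T * B = 1\<^sub>m n" and BT: "B * T = 1\<^sub>m (dim_row B)"
    unfolding invertible_mat_def inverts_mat_def by auto
  have B: "B \<in> carrier_mat n n"
    using arg_cong[OF TB, of dim_col] arg_cong[OF BT, of dim_col] T(1) by auto
  have "det T * det B = 1" using det_mult[OF T(1) B] TB by simp
  then have "det (transpose_mat T) \<noteq> 0" using det_transpose[OF T(1)] by auto
  then show ?thesis using det_0_iff_vec_prod_zero[of "transpose_mat T" n] T(1) a by auto
qed

definition affinely_spanning :: "nat \<Rightarrow> real vec set \<Rightarrow> bool" where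
  "affinely_spanning n S \<longleftrightarrow> \<not> (\<exists>a d. a \<in> carrier_vec n \<and> a \<noteq> 0\<^sub>v n \<and> S \<subseteq> hyperplane n a d)"

lemma affinely_spanning_imageI:
  assumes f: "\<And>t. f t \<in> carrier_vec n"
    and trivial: "\<And>a d. \<forall>t\<in>U. (\<Sum>i<n. a i * f t $ i) = d \<Longrightarrow> \<forall>i<n. a i = 0"
  shows "affinely_spanning n (f ` U)"
  unfolding affinely_spanning_def
proof
  assume "\<exists>a d. a \<in> carrier_vec n \<and> a \<noteq> 0\<^sub>v n \<and> f ` U \<subseteq> hyperplane n a d"
  then obtain a d where a: "a \<in> carrier_vec n" "a \<noteq> 0\<^sub>v n" and sub: "f ` U \<subseteq> hyperplane n a d"
    by blast
  have "(\<Sum>i<n. a $ i * f t $ i) = d" if "t \<in> U" for t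
    using sub that f[of t] by (auto simp: hyperplane_def scalar_prod_def lessThan_atLeast0)
  then have "\<forall>i<n. a $ i = 0" using trivial by blast
  with a show False by auto
qed

lemma affinely_spanning_affine_image:
  assumes T: "T \<in> carrier_mat n n" "invertible_mat T" and v: "v \<in> carrier_vec n"
    and S: "S \<subseteq> carrier_vec n" and span: "affinely_spanning n S"
  shows "affinely_spanning n ((\<lambda>s. T *\<^sub>v s + v) ` S)"
  unfolding affinely_spanning_def
proof
  assume "\<exists>a d. a \<in> carrier_vec n \<and> a \<noteq> 0\<^sub>v n \<and> (\<lambda>s. T *\<^sub>v s + v) ` S \<subseteq> hyperplane n a d"
  then obtain a d where a: "a \<in> carrier_vec n" "a \<noteq> 0\<^sub>v n"
    and sub: "(\<lambda>s. T *\<^sub>v s + v) ` S \<subseteq> hyperplane n a d" by blast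
  have "S \<subseteq> hyperplane n (transpose_mat T *\<^sub>v a) (d - a \<bullet> v)"
  proof
    fix s assume s: "s \<in> S"
    then have "a \<bullet> (T *\<^sub>v s + v) = d" using sub by (auto simp: hyperplane_def)
    moreover have "a \<bullet> (T *\<^sub>v s + v) = (transpose_mat T *\<^sub>v a) \<bullet> s + a \<bullet> v"
      using s S T(1) a(1) v
      by (auto simp: scalar_prod_add_distrib[of _ n] transpose_vec_mult_scalar[of _ n n])
    ultimately show "s \<in> hyperplane n (transpose_mat T *\<^sub>v a) (d - a \<bullet> v)"
      using s S by (auto simp: hyperplane_def)
  qed
  moreover have "transpose_mat T *\<^sub>v a \<noteq> 0\<^sub>v n"
    using invertible_transpose_kernel_trivial[OF T a(1)] a(2) by blast
  moreover have "transpose_mat T *\<^sub>v a \<in> carrier_vec n"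
    using T(1) by (intro carrier_vecI) simp
  ultimately show False
    using span unfolding affinely_spanning_def by auto
qed

lemma vupd_dim [simp]: "dim_vec (vupd t j x) = dim_vec t"
  by (simp add: vupd_def)

lemma vupd_nth [simp]: "i < dim_vec t \<Longrightarrow> vupd t j x $ i = (if i = j then x else t $ i)"
  by (simp add: vupd_def)

lemma open_vec_dim: "open_vec m U \<Longrightarrow> t \<in> U \<Longrightarrow> dim_vec t = m"
  unfolding open_vec_def by (auto dest: carrier_vecD)

lemma open_vec_vupd:
  assumes U: "open_vec m U" and t: "t \<in> U" and j: "j < m"
  shows "\<exists>e>0. \<forall>x. \<bar>x - t $ j\<bar> < e \<longrightarrow> vupd t j x \<in> U"
proof -
  have "\<forall>t\<in>U. \<exists>e>0. \<forall>u\<in>carrier_vec m. sqrt (\<Sum>i<m. (u $ i - t $ i)^2) < e \<longrightarrow> u \<in> U"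
    using U unfolding open_vec_def by simp
  from bspec[OF this t] obtain e where e: "e > 0"
    and ball: "\<forall>u\<in>carrier_vec m. sqrt (\<Sum>i<m. (u $ i - t $ i)^2) < e \<longrightarrow> u \<in> U"
    by (elim exE conjE)
  have t_dim: "dim_vec t = m" using open_vec_dim[OF U t] .
  have "vupd t j x \<in> U" if x: "\<bar>x - t $ j\<bar> < e" for x
  proof (rule ball[rule_format])
    show "vupd t j x \<in> carrier_vec m" using t_dim by (intro carrier_vecI) simp
    have "(\<Sum>i<m. (vupd t j x $ i - t $ i)^2) = (\<Sum>i<m. if i = j then (x - t $ j)^2 else 0)"
      using t_dim by (intro sum.cong) auto
    also have "\<dots> = (x - t $ j)^2" using j by simp
    finally show "sqrt (\<Sum>i<m. (vupd t j x $ i - t $ i)^2) < e" using x by simp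
  qed
  with e show ?thesis by blast
qed

lemma quadratic_vanishing_near:
  fixes A B C z e :: real
  assumes e: "e > 0" and zero: "\<And>x. \<bar>x - z\<bar> < e \<Longrightarrow> A * x^2 + B * x + C = 0"
  shows "A = 0 \<and> B = 0 \<and> C = 0"
proof -
  define h where "h = e / 2"
  have h: "h \<noteq> 0" using e by (simp add: h_def)
  have z: "A * z^2 + B * z + C = 0" and zp: "A * (z + h)^2 + B * (z + h) + C = 0"
    and zm: "A * (z - h)^2 + B * (z - h) + C = 0"
    using zero e by (auto simp: h_def)
  have "2 * A * h^2 = (A * (z + h)^2 + B * (z + h) + C) + (A * (z - h)^2 + B * (z - h) + C)
      - 2 * (A * z^2 + B * z + C)"
    by (simp add: power2_eq_square algebra_simps)
  then have A: "A = 0" using z zp zm h by simp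
  have "2 * B * h = (A * (z + h)^2 + B * (z + h) + C) - (A * (z - h)^2 + B * (z - h) + C)"
    using A by (simp add: algebra_simps)
  then have B: "B = 0" using zp zm h by simp
  show ?thesis using A B z by simp
qed

lemma quadratic_vanishing_on_coordinate_line:
  fixes A B C :: real
  assumes "open_vec m U" "t \<in> U" "j < m"
    and zero: "\<And>x. vupd t j x \<in> U \<Longrightarrow> A * x^2 + B * x + C = 0"
  shows "A = 0 \<and> B = 0 \<and> C = 0"
  using open_vec_vupd[OF assms(1-3)] quadratic_vanishing_near zero by metis

lemma sum_vupd:
  fixes g :: "nat \<Rightarrow> real \<Rightarrow> real"
  assumes "finite S" "S \<subseteq> {..<dim_vec t}"
  shows "(\<Sum>i\<in>S. g i (vupd t j x $ i))
    = (\<Sum>i\<in>S. g i (t $ i)) + (if j \<in> S then g j x - g j (t $ j) else 0)"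
proof -
  have "(\<Sum>i\<in>S - {j}. g i (vupd t j x $ i)) = (\<Sum>i\<in>S - {j}. g i (t $ i))"
    using assms(2) by (intro sum.cong) auto
  moreover have "vupd t j x $ j = x" if "j \<in> S" using that assms(2) by auto
  ultimately show ?thesis
    using assms(1) by (cases "j \<in> S") (simp_all add: sum.remove algebra_simps)
qed

lemma sigma'_carrier_vec: "sigma' k n eps c' t \<in> carrier_vec n"
  by (cases k) (simp_all add: sigma'_def sph_def)

lemma sum_sigma'_graph:
  assumes "k \<noteq> Ellipsoid" "n \<ge> 1"
  shows "(\<Sum>i<n. a i * sigma' k n eps c' t $ i)
    = (\<Sum>i<n-1. a i * t $ i) + a (n-1) * sigma' k n eps c' t $ (n-1)"
proof -
  have "(\<Sum>i<n. a i * sigma' k n eps c' t $ i)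
      = (\<Sum>i<n-1. a i * sigma' k n eps c' t $ i) + a (n-1) * sigma' k n eps c' t $ (n-1)"
    using assms(2) sum.lessThan_Suc[of _ "n-1"] by simp
  moreover have "sigma' k n eps c' t $ i = t $ i" if "i < n-1" for i
    using assms(1) that by (cases k) (auto simp: sigma'_def)
  ultimately show ?thesis by simp
qed

lemma paraboloid_affinely_spanning:
  assumes n: "n \<ge> 2" and eps: "\<forall>j<n-1. eps j \<in> {-1, 1}"
    and U: "open_vec (n-1) U" "t0 \<in> U"
  shows "affinely_spanning n (sigma' Paraboloid n eps c' ` U)"
proof (rule affinely_spanning_imageI[OF sigma'_carrier_vec])
  fix a d assume rel: "\<forall>t\<in>U. (\<Sum>i<n. a i * sigma' Paraboloid n eps c' t $ i) = d"
  have t0_dim: "dim_vec t0 = n-1" using open_vec_dim[OF U] .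
  define Q where "Q t = (\<Sum>i<n-1. eps i * (t $ i)^2)" for t
  have rel': "(\<Sum>i<n-1. a i * t $ i) + a (n-1) * Q t = d" if "t \<in> U" for t
    using rel that n sum_sigma'_graph[of Paraboloid n a eps c' t] by (simp add: sigma'_def Q_def)
  have coord: "a (n-1) * eps j = 0 \<and> a j = 0" if j: "j < n-1" for j
  proof -
    define R where "R = (\<Sum>i<n-1. a i * t0 $ i) - a j * t0 $ j + a (n-1) * (Q t0 - eps j * (t0 $ j)^2)"
    have "(a (n-1) * eps j) * x^2 + a j * x + (R - d) = 0" if "vupd t0 j x \<in> U" for x
    proof -
      have "(\<Sum>i<n-1. a i * vupd t0 j x $ i) = (\<Sum>i<n-1. a i * t0 $ i) - a j * t0 $ j + a j * x"
        using sum_vupd[of "{..<n-1}" t0 "\<lambda>i y. a i * y"] j t0_dim by simp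
      moreover have "Q (vupd t0 j x) = Q t0 - eps j * (t0 $ j)^2 + eps j * x^2"
        using sum_vupd[of "{..<n-1}" t0 "\<lambda>i y. eps i * y^2"] j t0_dim by (simp add: Q_def)
      ultimately have "(\<Sum>i<n-1. a i * t0 $ i) - a j * t0 $ j + a j * x
          + a (n-1) * (Q t0 - eps j * (t0 $ j)^2 + eps j * x^2) = d"
        using rel'[OF that] by simp
      then show ?thesis by (simp add: R_def algebra_simps)
    qed
    then show ?thesis using quadratic_vanishing_on_coordinate_line[OF U j] by blast
  qed
  have "eps 0 \<in> {-1, 1}" using eps n by simp
  then have "eps 0 \<noteq> 0" by auto
  then have "a (n-1) = 0" using coord[of 0] n by simp
  moreover have "i < n-1 \<or> i = n-1" if "i < n" for i using that by linarith
  ultimately show "\<forall>i<n. a i = 0" using coord by blast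
qed

lemma hyperboloid_affinely_spanning:
  assumes n: "n \<ge> 2" and eps: "\<forall>j\<in>{1..<n-1}. eps j \<in> {-1, 1}" and c': "c' \<noteq> 0"
    and U: "open_vec (n-1) U" "t0 \<in> U" and U_nz: "\<forall>t\<in>U. t $ 0 \<noteq> 0"
  shows "affinely_spanning n (sigma' Hyperboloid n eps c' ` U)"
proof (rule affinely_spanning_imageI[OF sigma'_carrier_vec])
  fix a d assume rel: "\<forall>t\<in>U. (\<Sum>i<n. a i * sigma' Hyperboloid n eps c' t $ i) = d"
  have t0_dim: "dim_vec t0 = n-1" using open_vec_dim[OF U] .
  have t0_nz: "t0 $ 0 \<noteq> 0" using U_nz U by blast
  define Q where "Q t = (\<Sum>i\<in>{1..<n-1}. eps i * (t $ i)^2)" for t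
  have rel': "(\<Sum>i<n-1. a i * t $ i) + a (n-1) * ((1 / t $ 0) * (c' - Q t)) = d" if "t \<in> U" for t
    using rel that n sum_sigma'_graph[of Hyperboloid n a eps c' t] by (simp add: sigma'_def Q_def)
  have first_coord: "a 0 = 0 \<and> a (n-1) * (c' - Q t0) = 0"
  proof -
    have pos: "0 < n-1" using n by simp
    define R where "R = (\<Sum>i<n-1. a i * t0 $ i) - a 0 * t0 $ 0"
    have "a 0 * x^2 + (R - d) * x + a (n-1) * (c' - Q t0) = 0" if "vupd t0 0 x \<in> U" for x
    proof -
      have x0: "vupd t0 0 x $ 0 = x" using pos t0_dim by simp
      then have "x \<noteq> 0" using U_nz that by metis
      have "(\<Sum>i<n-1. a i * vupd t0 0 x $ i) = R + a 0 * x"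
        using sum_vupd[of "{..<n-1}" t0 "\<lambda>i y. a i * y"] pos t0_dim by (simp add: R_def)
      moreover have "Q (vupd t0 0 x) = Q t0"
        using sum_vupd[of "{1..<n-1}" t0 "\<lambda>i y. eps i * y^2"] t0_dim by (simp add: Q_def)
      ultimately have "R + a 0 * x + a (n-1) * ((1 / x) * (c' - Q t0)) = d"
        using rel'[OF that] x0 by simp
      with \<open>x \<noteq> 0\<close> show ?thesis by (simp add: field_simps power2_eq_square)
    qed
    then show ?thesis using quadratic_vanishing_on_coordinate_line[OF U pos] by blast
  qed
  have other_coord: "a (n-1) = 0 \<and> a j = 0" if j: "j \<in> {1..<n-1}" for j
  proof -
    have j': "j < n-1" using j by simp
    define R where "R = (\<Sum>i<n-1. a i * t0 $ i) - a j * t0 $ j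
      + a (n-1) * ((1 / t0 $ 0) * (c' - Q t0 + eps j * (t0 $ j)^2))"
    have "- (a (n-1) * eps j * (1 / t0 $ 0)) * x^2 + a j * x + (R - d) = 0" if "vupd t0 j x \<in> U" for x
    proof -
      have "(\<Sum>i<n-1. a i * vupd t0 j x $ i) = (\<Sum>i<n-1. a i * t0 $ i) - a j * t0 $ j + a j * x"
        using sum_vupd[of "{..<n-1}" t0 "\<lambda>i y. a i * y"] j' t0_dim by simp
      moreover have "Q (vupd t0 j x) = Q t0 - eps j * (t0 $ j)^2 + eps j * x^2"
        using sum_vupd[of "{1..<n-1}" t0 "\<lambda>i y. eps i * y^2"] j t0_dim
        by (simp add: Q_def subset_iff)
      moreover have "vupd t0 j x $ 0 = t0 $ 0" using j t0_dim by (subst vupd_nth) auto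
      ultimately have "(\<Sum>i<n-1. a i * t0 $ i) - a j * t0 $ j + a j * x
          + a (n-1) * ((1 / t0 $ 0) * (c' - (Q t0 - eps j * (t0 $ j)^2 + eps j * x^2))) = d"
        using rel'[OF that] by simp
      then show ?thesis by (simp add: R_def algebra_simps)
    qed
    from quadratic_vanishing_on_coordinate_line[OF U j' this]
    have "a (n-1) * eps j * (1 / t0 $ 0) = 0" "a j = 0" by simp_all
    moreover have "eps j \<in> {-1, 1}" using eps j by blast
    then have "eps j \<noteq> 0" by auto
    ultimately show ?thesis using t0_nz by simp
  qed
  have "a (n-1) = 0"
  proof (cases "n = 2")
    case True
    then have "Q t0 = 0" by (simp add: Q_def)
    then show ?thesis using first_coord c' by simp
  next
    case False
    then show ?thesis using other_coord[of 1] n by simp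
  qed
  moreover have "i = 0 \<or> i \<in> {1..<n-1} \<or> i = n-1" if "i < n" for i using that by auto
  ultimately show "\<forall>i<n. a i = 0" using first_coord other_coord by blast
qed

lemma sph_nth: "m < n \<Longrightarrow> sph n phi $ m = (\<Prod>i<m. sin (phi $ i)) * (if m = n-1 then 1 else cos (phi $ m))"
  by (simp add: sph_def)

lemma sph_vupd:
  assumes phi: "dim_vec phi = n-1" and k: "k < n-1" and m: "m < n"
  shows "sph n (vupd phi k y) $ m = (if m < k then sph n phi $ m else 0)
    + (if m = k then (\<Prod>i<k. sin (phi $ i)) else 0) * cos y
    + (if k < m then sph n (vupd phi k (pi/2)) $ m else 0) * sin y"
proof (cases rule: linorder_cases[of m k])
  case less
  then have "(\<Prod>i<m. sin (vupd phi k y $ i)) = (\<Prod>i<m. sin (phi $ i))"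
    using phi k by (intro prod.cong) auto
  then show ?thesis using less phi k m by (simp add: sph_nth)
next
  case equal
  have "(\<Prod>i<k. sin (vupd phi k y $ i)) = (\<Prod>i<k. sin (phi $ i))"
    using phi k by (intro prod.cong) auto
  then show ?thesis using equal phi k m by (simp add: sph_nth)
next
  case greater
  \<comment> \<open>The coefficient of \<open>sin y\<close> is read off at \<open>y = pi/2\<close>.\<close>
  have "sph n (vupd phi k z) $ m
      = sin z * ((\<Prod>i\<in>{..<m} - {k}. sin (phi $ i)) * (if m = n-1 then 1 else cos (phi $ m)))" for z
  proof -
    have "(\<Prod>i\<in>{..<m} - {k}. sin (vupd phi k z $ i)) = (\<Prod>i\<in>{..<m} - {k}. sin (phi $ i))"
      using phi m by (intro prod.cong) auto
    then have "(\<Prod>i<m. sin (vupd phi k z $ i)) = sin z * (\<Prod>i\<in>{..<m} - {k}. sin (phi $ i))"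
      using greater phi k by (simp add: prod.remove)
    moreover have "m \<noteq> n-1 \<Longrightarrow> vupd phi k z $ m = phi $ m" using greater phi m by simp
    ultimately show ?thesis using m by (simp add: sph_nth)
  qed
  then show ?thesis using greater by simp
qed

lemma sum_sph_vupd:
  assumes phi: "dim_vec phi = n-1" and k: "k < n-1"
  shows "(\<Sum>m<n. a m * sph n (vupd phi k y) $ m)
    = (\<Sum>m<k. a m * sph n phi $ m) + a k * (\<Prod>i<k. sin (phi $ i)) * cos y
      + (\<Sum>m\<in>{k<..<n}. a m * sph n (vupd phi k (pi/2)) $ m) * sin y"
proof -
  have "(\<Sum>m<n. a m * sph n (vupd phi k y) $ m)
      = (\<Sum>m<n. (if m < k then a m * sph n phi $ m else 0)
          + (if m = k then a k * (\<Prod>i<k. sin (phi $ i)) else 0) * cos y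
          + (if k < m then a m * sph n (vupd phi k (pi/2)) $ m else 0) * sin y)"
  proof (rule sum.cong)
    fix m assume "m \<in> {..<n}"
    then have "m < n" by simp
    then show "a m * sph n (vupd phi k y) $ m
        = (if m < k then a m * sph n phi $ m else 0)
          + (if m = k then a k * (\<Prod>i<k. sin (phi $ i)) else 0) * cos y
          + (if k < m then a m * sph n (vupd phi k (pi/2)) $ m else 0) * sin y"
      using sph_vupd[OF phi k \<open>m < n\<close>, of y] by (simp add: distrib_left)
  qed simp
  moreover have "{m \<in> {..<n}. m < k} = {..<k}" "{m \<in> {..<n}. k < m} = {k<..<n}" using k by auto
  ultimately show ?thesis
    using k by (simp add: sum.distrib sum.inter_filter[symmetric] flip: sum_distrib_right)
qed

lemma sph_vupd_last:
  assumes n: "n \<ge> 2" and phi: "dim_vec phi = n-1"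
  shows "sph n (vupd phi (n-2) (pi/2)) $ (n-1) = (\<Prod>i<n-2. sin (phi $ i))"
proof -
  have "n - 1 = Suc (n-2)" using n by simp
  then have "(\<Prod>i<n-1. sin (vupd phi (n-2) (pi/2) $ i))
      = (\<Prod>i<n-2. sin (vupd phi (n-2) (pi/2) $ i)) * 1"
    using phi n by (simp add: prod.lessThan_Suc del: vupd_nth) (simp add: phi)
  also have "(\<Prod>i<n-2. sin (vupd phi (n-2) (pi/2) $ i)) = (\<Prod>i<n-2. sin (phi $ i))"
    using phi by (auto intro!: prod.cong)
  finally show ?thesis using n by (simp add: sph_nth)
qed

lemma sigma'_Ellipsoid_vupd:
  assumes "dim_vec t = n-1" "k < n-1"
  shows "sigma' Ellipsoid n eps c' (vupd t k x)
    = sph n (vupd (vec (n-1) (\<lambda>j. 2 * arctan (t $ j))) k (2 * arctan x))"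
  unfolding sigma'_def using assms by (auto intro!: arg_cong[where f = "sph n"])


lemma cos_double_arctan: "cos (2 * arctan x) = (1 - x^2) / (1 + x^2)"
proof -
  have "cos (2 * arctan x) = (cos (arctan x))^2 - (sin (arctan x))^2" by (rule cos_double)
  also have "\<dots> = 1 / (1 + x^2) - x^2 / (1 + x^2)"
    by (simp add: cos_arctan sin_arctan power_divide add_pos_nonneg)
  finally show ?thesis by (simp add: diff_divide_distrib)
qed

lemma sin_double_arctan: "sin (2 * arctan x) = 2 * x / (1 + x^2)"
proof -
  have "sin (2 * arctan x) = 2 * sin (arctan x) * cos (arctan x)" by (rule sin_double)
  also have "\<dots> = 2 * x / (sqrt (1 + x^2) * sqrt (1 + x^2))"
    by (simp add: cos_arctan sin_arctan)
  also have "sqrt (1 + x^2) * sqrt (1 + x^2) = 1 + x^2" by (simp add: add_nonneg_nonneg)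
  finally show ?thesis .
qed

lemma trig_combination_double_arctan:
  fixes x \<alpha> \<beta> \<gamma> :: real
  shows "(1 + x^2) * (\<alpha> + \<beta> * cos (2 * arctan x) + \<gamma> * sin (2 * arctan x))
    = (\<alpha> - \<beta>) * x^2 + 2 * \<gamma> * x + (\<alpha> + \<beta>)"
proof -
  have clear_denominator: "D * (\<alpha> + \<beta> * (p / D) + \<gamma> * (q / D)) = D * \<alpha> + \<beta> * p + \<gamma> * q"
    if "D \<noteq> 0" for D p q :: real
    using that by (simp add: field_simps)
  have "1 + x^2 \<noteq> 0" using zero_le_power2[of x] by linarith
  from clear_denominator[OF this, of "1 - x^2" "2 * x"] show ?thesis
    unfolding cos_double_arctan sin_double_arctan by (simp add: algebra_simps)
qed

lemma ellipsoid_affinely_spanning: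
  assumes n: "n \<ge> 2" and U: "open_vec (n-1) U" "t0 \<in> U"
    and sin_nz: "\<forall>i<n-2. sin (2 * arctan (t0 $ i)) \<noteq> 0"
  shows "affinely_spanning n (sigma' Ellipsoid n eps c' ` U)"
proof (rule affinely_spanning_imageI[OF sigma'_carrier_vec])
  fix a d assume rel: "\<forall>t\<in>U. (\<Sum>m<n. a m * sigma' Ellipsoid n eps c' t $ m) = d"
  have t0_dim: "dim_vec t0 = n-1" using open_vec_dim[OF U] .
  define phi where "phi = vec (n-1) (\<lambda>j. 2 * arctan (t0 $ j))"
  have phi_dim: "dim_vec phi = n-1" by (simp add: phi_def)
  define P where "P k = (\<Prod>i<k. sin (phi $ i))" for k
  have P_nz: "P k \<noteq> 0" if "k \<le> n-2" for k
    using that sin_nz unfolding P_def by (subst prod_zero_iff) (auto simp: phi_def)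
  have coeffs: "a k * P k = 0 \<and> (\<Sum>m\<in>{k<..<n}. a m * sph n (vupd phi k (pi/2)) $ m) = 0"
    if k: "k < n-1" for k
  proof -
    define \<alpha> where "\<alpha> = (\<Sum>m<k. a m * sph n phi $ m) - d"
    define \<beta> where "\<beta> = a k * P k"
    define \<gamma> where "\<gamma> = (\<Sum>m\<in>{k<..<n}. a m * sph n (vupd phi k (pi/2)) $ m)"
    have "(\<alpha> - \<beta>) * x^2 + (2 * \<gamma>) * x + (\<alpha> + \<beta>) = 0" if "vupd t0 k x \<in> U" for x
    proof -
      have "(\<Sum>m<n. a m * sph n (vupd phi k (2 * arctan x)) $ m) = d"
        using rel[rule_format, OF that] by (simp add: sigma'_Ellipsoid_vupd[OF t0_dim k] phi_def)
      then have "\<alpha> + \<beta> * cos (2 * arctan x) + \<gamma> * sin (2 * arctan x) = 0"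
        by (simp add: sum_sph_vupd[OF phi_dim k] \<alpha>_def \<beta>_def \<gamma>_def P_def)
      then show ?thesis using trig_combination_double_arctan[of x \<alpha> \<beta> \<gamma>] by simp
    qed
    from quadratic_vanishing_on_coordinate_line[OF U k this]
    have "\<beta> = 0" "\<gamma> = 0" by linarith+
    then show ?thesis by (simp add: \<beta>_def \<gamma>_def)
  qed
  have "{n-2<..<n} = {n-1}" using n by auto
  then have "a (n-1) * P (n-2) = 0"
    using coeffs[of "n-2"] sph_vupd_last[OF n phi_dim] n by (simp add: P_def)
  then have "a (n-1) = 0" using P_nz[of "n-2"] by simp
  moreover have "a k = 0" if "k < n-1" for k
    using coeffs[OF that] P_nz[of k] that by simp
  moreover have "i < n-1 \<or> i = n-1" if "i < n" for i using that by linarith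
  ultimately show "\<forall>i<n. a i = 0" by blast
qed

lemma ellipsoid_jacobian_det_ne_0_imp_sin_ne_0:
  assumes n: "n \<ge> 2" and t: "dim_vec t = n-1" and i: "i < n-2"
    and det: "det (jacobian (n-1) (n-1) (\<lambda>t. vtrunc n (sigma' Ellipsoid n eps c' t)) t) \<noteq> 0"
  shows "sin (2 * arctan (t $ i)) \<noteq> 0"
proof
  assume sin0: "sin (2 * arctan (t $ i)) = 0"
  define phi where "phi = vec (n-1) (\<lambda>j. 2 * arctan (t $ j))"
  have phi_dim: "dim_vec phi = n-1" by (simp add: phi_def)
  have k: "n-2 < n-1" using n by simp
  have P0: "(\<Prod>i<n-2. sin (phi $ i)) = 0"
    using sin0 i by (intro prod_zero bexI[of _ i]) (auto simp: phi_def)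
  have const: "vtrunc n (sigma' Ellipsoid n eps c' (vupd t (n-2) x)) $ r
      = (if r < n-2 then sph n phi $ r else 0)" if r: "r < n-1" for r x
  proof -
    have "r < n" "\<not> n-2 < r" using r by simp_all
    have "vtrunc n (sigma' Ellipsoid n eps c' (vupd t (n-2) x)) $ r
        = sph n (vupd phi (n-2) (2 * arctan x)) $ r"
      using r by (simp add: vtrunc_def sigma'_Ellipsoid_vupd[OF t k] phi_def)
    also have "\<dots> = (if r < n-2 then sph n phi $ r else 0)"
      using sph_vupd[OF phi_dim k \<open>r < n\<close>] P0 \<open>\<not> n-2 < r\<close> by simp
    finally show ?thesis .
  qed
  have "det (jacobian (n-1) (n-1) (\<lambda>t. vtrunc n (sigma' Ellipsoid n eps c' t)) t) = 0"
  proof (rule det_eq_0_if_zero_col[OF _ k])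
    show "jacobian (n-1) (n-1) (\<lambda>t. vtrunc n (sigma' Ellipsoid n eps c' t)) t \<in> carrier_mat (n-1) (n-1)"
      by (simp add: jacobian_def)
    show "jacobian (n-1) (n-1) (\<lambda>t. vtrunc n (sigma' Ellipsoid n eps c' t)) t $$ (r, n-2) = 0"
      if "r < n-1" for r
      using that k by (simp add: jacobian_def const)
  qed
  with det show False by contradiction
qed

theorem lemma5:
  fixes n :: nat and A T :: "real mat" and b v :: "real vec" and c c' :: real
    and eps :: "nat \<Rightarrow> real" and k :: nf_case and U :: "real vec set"
  assumes n2: "n \<ge> 2"
    and A: "A \<in> carrier_mat n n" "transpose_mat A = A" "A \<noteq> 0\<^sub>m n n"
    and b: "b \<in> carrier_vec n"
    and two_points: "\<exists>p\<in>quadric n A b c. \<exists>q\<in>quadric n A b c. p \<noteq> q"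
    and no_line: "\<not> contains_line n (quadric n A b c)"
    and T: "T \<in> carrier_mat n n" "invertible_mat T"
    and v: "v \<in> carrier_vec n"
    and nf: "\<forall>s'\<in>carrier_vec n. (T *\<^sub>v s' + v \<in> quadric n A b c \<longleftrightarrow> normal_form k n eps c' s')"
    and cases:
      "(k = Paraboloid \<and> mat_rank n A = n - 1 \<and> (\<forall>j<n-1. eps j \<in> {-1, 1}))
     \<or> (k = Hyperboloid \<and> mat_rank n A = n
          \<and> (\<exists>l1 l2. eigenvalue A l1 \<and> l1 > 0 \<and> eigenvalue A l2 \<and> l2 < 0)
          \<and> c' \<noteq> 0 \<and> (\<forall>j\<in>{1..<n-1}. eps j \<in> {-1, 1}))
     \<or> (k = Ellipsoid \<and> mat_rank n A = n
          \<and> ((\<forall>l. eigenvalue A l \<longrightarrow> l > 0) \<or> (\<forall>l. eigenvalue A l \<longrightarrow> l < 0)))"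
    and O_sub: "U \<subseteq> param_dom k n - {t. sigma T v k n eps c' t $ 0 = 0}"
    and O_open: "open_vec (n-1) U"
    and jac: "\<exists>t\<in>U. det (jacobian (n-1) (n-1) (\<lambda>t. vtrunc n (sigma' k n eps c' t)) t) \<noteq> 0"
  shows "\<not> (\<exists>a d. a \<in> carrier_vec n \<and> a \<noteq> 0\<^sub>v n \<and>
              sigma T v k n eps c' ` U \<subseteq> hyperplane n a d)"
proof -
  obtain t0 where t0: "t0 \<in> U"
    and det: "det (jacobian (n-1) (n-1) (\<lambda>t. vtrunc n (sigma' k n eps c' t)) t0) \<noteq> 0"
    using jac by blast
  from cases consider
      (paraboloid) "k = Paraboloid" "\<forall>j<n-1. eps j \<in> {-1, 1}"
    | (hyperboloid) "k = Hyperboloid" "c' \<noteq> 0" "\<forall>j\<in>{1..<n-1}. eps j \<in> {-1, 1}"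
    | (ellipsoid) "k = Ellipsoid"
    by blast
  then have "affinely_spanning n (sigma' k n eps c' ` U)"
  proof cases
    case paraboloid
    then show ?thesis using paraboloid_affinely_spanning[OF n2 _ O_open t0] by simp
  next
    case hyperboloid
    moreover have "U \<subseteq> param_dom Hyperboloid n" using O_sub hyperboloid(1) by blast
    then have "\<forall>t\<in>U. t $ 0 \<noteq> 0" by (auto simp: param_dom_def)
    ultimately show ?thesis using hyperboloid_affinely_spanning[OF n2 _ _ O_open t0] by simp
  next
    case ellipsoid
    note k = ellipsoid
    have t0_dim: "dim_vec t0 = n-1" using open_vec_dim[OF O_open t0] .
    have "\<forall>i<n-2. sin (2 * arctan (t0 $ i)) \<noteq> 0"
      using ellipsoid_jacobian_det_ne_0_imp_sin_ne_0[OF n2 t0_dim _ det[unfolded k]] by blast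
    then show ?thesis using ellipsoid_affinely_spanning[OF n2 O_open t0] k by simp
  qed
  from affinely_spanning_affine_image[OF T v _ this]
  have "affinely_spanning n ((\<lambda>s. T *\<^sub>v s + v) ` sigma' k n eps c' ` U)"
    using sigma'_carrier_vec by blast
  moreover have "(\<lambda>s. T *\<^sub>v s + v) ` sigma' k n eps c' ` U = sigma T v k n eps c' ` U"
    unfolding sigma_def image_image ..
  ultimately show ?thesis unfolding affinely_spanning_def by simp
qed

end
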